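(* Let $Q$ be a commutative A-loop and for $x\in Q$ let $P_x = L_xL_{x^{-1}}^{-1}$, i.e. $yP_x = x^{-1}\backslash(xy)$. Then for all $x,y\in Q$, $P_xP_yP_x = P_{yP_x}$ (maps composed left to right). In particular, $P_Q=\{P_x : x\in Q\}$ is a twisted subgroup of $\mathrm{Mlt}(Q)$.
   Context: A loop is a set with a binary operation and neutral element $1$ in which all left translations $L_x:y\mapsto xy$ and right translations $y\mapsto yx$ are bijections; $\mathrm{Mlt}(Q)$ is the group they generate and $\mathrm{Inn}(Q)$ the stabilizer of $1$ in it. A commutative A-loop is a commutative loop all of whose inner mappings are automorphisms. Maps act on the right: $yL_x=xy$, and $y(\alpha\beta)=(y\alpha)\beta$. $x\backslash y$ is the unique $z$ with $xz=y$; $x^{-1}=x\backslash 1$. A twisted subgroup of a group $G$ is a subset $T\subseteq G$ with $1\in T$, $a^{-1}\in T$ for $a\in T$, and $aba\in T$ for $a,b\in T$. *)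

theory Defs
  imports "HOL-Algebra.Bij" "HOL-Algebra.Generated_Groups"
begin

text \<open>Maps on Q are represented as extensional functions (undefined outside Q), i.e.
  elements of Bij Q; the group BijGroup Q multiplies by composition.\<close>

definition loop :: "'a set \<Rightarrow> ('a \<Rightarrow> 'a \<Rightarrow> 'a) \<Rightarrow> 'a \<Rightarrow> bool" where
  "loop Q m e \<longleftrightarrow> e \<in> Q \<and> (\<forall>x\<in>Q. \<forall>y\<in>Q. m x y \<in> Q)
     \<and> (\<forall>x\<in>Q. m e x = x \<and> m x e = x)
     \<and> (\<forall>x\<in>Q. bij_betw (\<lambda>y. m x y) Q Q)
     \<and> (\<forall>x\<in>Q. bij_betw (\<lambda>y. m y x) Q Q)"

definition lmap :: "'a set \<Rightarrow> ('a \<Rightarrow> 'a \<Rightarrow> 'a) \<Rightarrow> 'a \<Rightarrow> ('a \<Rightarrow> 'a)" where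
  "lmap Q m x = (\<lambda>y\<in>Q. m x y)"

definition rmap :: "'a set \<Rightarrow> ('a \<Rightarrow> 'a \<Rightarrow> 'a) \<Rightarrow> 'a \<Rightarrow> ('a \<Rightarrow> 'a)" where
  "rmap Q m x = (\<lambda>y\<in>Q. m y x)"

definition Mlt :: "'a set \<Rightarrow> ('a \<Rightarrow> 'a \<Rightarrow> 'a) \<Rightarrow> ('a \<Rightarrow> 'a) set" where
  "Mlt Q m = generate (BijGroup Q) (lmap Q m ` Q \<union> rmap Q m ` Q)"

definition Inn :: "'a set \<Rightarrow> ('a \<Rightarrow> 'a \<Rightarrow> 'a) \<Rightarrow> 'a \<Rightarrow> ('a \<Rightarrow> 'a) set" where
  "Inn Q m e = {f \<in> Mlt Q m. f e = e}"

definition loop_aut :: "'a set \<Rightarrow> ('a \<Rightarrow> 'a \<Rightarrow> 'a) \<Rightarrow> ('a \<Rightarrow> 'a) \<Rightarrow> bool" where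
  "loop_aut Q m f \<longleftrightarrow> bij_betw f Q Q \<and> (\<forall>x\<in>Q. \<forall>y\<in>Q. f (m x y) = m (f x) (f y))"

definition comm_A_loop :: "'a set \<Rightarrow> ('a \<Rightarrow> 'a \<Rightarrow> 'a) \<Rightarrow> 'a \<Rightarrow> bool" where
  "comm_A_loop Q m e \<longleftrightarrow> loop Q m e \<and> (\<forall>x\<in>Q. \<forall>y\<in>Q. m x y = m y x)
     \<and> (\<forall>f\<in>Inn Q m e. loop_aut Q m f)"

definition ldiv :: "'a set \<Rightarrow> ('a \<Rightarrow> 'a \<Rightarrow> 'a) \<Rightarrow> 'a \<Rightarrow> 'a \<Rightarrow> 'a" where
  "ldiv Q m x y = (THE z. z \<in> Q \<and> m x z = y)"

definition linv :: "'a set \<Rightarrow> ('a \<Rightarrow> 'a \<Rightarrow> 'a) \<Rightarrow> 'a \<Rightarrow> 'a \<Rightarrow> 'a" where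
  "linv Q m e x = ldiv Q m x e"

definition Pmap :: "'a set \<Rightarrow> ('a \<Rightarrow> 'a \<Rightarrow> 'a) \<Rightarrow> 'a \<Rightarrow> 'a \<Rightarrow> ('a \<Rightarrow> 'a)" where
  "Pmap Q m e x = (\<lambda>y\<in>Q. ldiv Q m (linv Q m e x) (m x y))"

definition twisted_subgroup :: "('g, 'b) monoid_scheme \<Rightarrow> 'g set \<Rightarrow> bool" where
  "twisted_subgroup G T \<longleftrightarrow> T \<subseteq> carrier G \<and> \<one>\<^bsub>G\<^esub> \<in> T
     \<and> (\<forall>a\<in>T. inv\<^bsub>G\<^esub> a \<in> T)
     \<and> (\<forall>a\<in>T. \<forall>b\<in>T. a \<otimes>\<^bsub>G\<^esub> b \<otimes>\<^bsub>G\<^esub> a \<in> T)"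

end

theory Submission
  imports Defs
begin

text \<open>In a commutative A-loop every element of \<open>Mlt(Q)\<close> fixing \<open>1\<close> is an automorphism, so any
  composite of translations and their inverses that fixes \<open>1\<close> respects products and inverses.
  Applied to \<open>L\<^sub>x\<^sub>\<inverse>L\<^sub>x\<close> and to the left inner mappings \<open>L(x,y)\<close>, this shows that \<open>L\<^sub>x\<close> and \<open>L\<^sub>x\<^sub>\<inverse>\<close>
  commute and then the automorphic inverse property \<open>(xy)\<inverse> = x\<inverse>y\<inverse>\<close>. Applied once more to
  \<open>t \<mapsto> (yP\<^sub>x)\((yt)P\<^sub>x)\<close>, it gives \<open>P\<^sub>xP\<^sub>yP\<^sub>x = P\<^sub>y\<^sub>P\<^sub>x\<close>. Since \<open>P\<^sub>1 = id\<close> and \<open>P\<^sub>x\<inverse> = P\<^sub>x\<^sub>\<inverse>\<close>, the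
  set of all \<open>P\<^sub>x\<close> is then a twisted subgroup.\<close>

lemma (in group) twisted_subgroup_restrict_carrier:
  assumes "subgroup H G" "T \<subseteq> H" "twisted_subgroup G T"
  shows "twisted_subgroup (G\<lparr>carrier := H\<rparr>) T"
  using assms m_inv_consistent[OF assms(1)] unfolding twisted_subgroup_def by auto

locale loop_on =
  fixes Q :: "'a set" and m :: "'a \<Rightarrow> 'a \<Rightarrow> 'a" and e :: 'a
  assumes loop: "loop Q m e"
begin

lemma unit_closed [simp]: "e \<in> Q"
  using loop by (simp add: loop_def)

lemma mult_closed [simp]: "x \<in> Q \<Longrightarrow> y \<in> Q \<Longrightarrow> m x y \<in> Q"
  using loop by (simp add: loop_def)

lemma mult_unit_left [simp]: "x \<in> Q \<Longrightarrow> m e x = x"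
  using loop by (simp add: loop_def)

lemma mult_unit_right [simp]: "x \<in> Q \<Longrightarrow> m x e = x"
  using loop by (simp add: loop_def)

lemma bij_left_mult: "x \<in> Q \<Longrightarrow> bij_betw (\<lambda>y. m x y) Q Q"
  using loop by (simp add: loop_def)

lemma bij_right_mult: "x \<in> Q \<Longrightarrow> bij_betw (\<lambda>y. m y x) Q Q"
  using loop by (simp add: loop_def)

lemma left_cancel: "x \<in> Q \<Longrightarrow> a \<in> Q \<Longrightarrow> b \<in> Q \<Longrightarrow> m x a = m x b \<Longrightarrow> a = b"
  using bij_left_mult[of x] by (simp add: bij_betw_def inj_on_def)

lemma ex1_left_solution: assumes "x \<in> Q" "y \<in> Q" shows "\<exists>!z. z \<in> Q \<and> m x z = y"
proof -
  have "y \<in> (\<lambda>z. m x z) ` Q"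
    using bij_left_mult[OF assms(1)] assms(2) by (simp add: bij_betw_def)
  then show ?thesis
    using left_cancel[OF assms(1)] by blast
qed

abbreviation ld :: "'a \<Rightarrow> 'a \<Rightarrow> 'a" where "ld \<equiv> ldiv Q m"

lemma ldiv_closed [simp]: "x \<in> Q \<Longrightarrow> y \<in> Q \<Longrightarrow> ld x y \<in> Q"
  unfolding ldiv_def using theI'[OF ex1_left_solution] by blast

lemma mult_ldiv [simp]: "x \<in> Q \<Longrightarrow> y \<in> Q \<Longrightarrow> m x (ld x y) = y"
  unfolding ldiv_def using theI'[OF ex1_left_solution] by blast

lemma ldiv_mult [simp]: "x \<in> Q \<Longrightarrow> y \<in> Q \<Longrightarrow> ld x (m x y) = y"
  by (metis left_cancel mult_ldiv ldiv_closed mult_closed)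

lemma ldiv_unique: "x \<in> Q \<Longrightarrow> z \<in> Q \<Longrightarrow> m x z = y \<Longrightarrow> ld x y = z"
  by (metis ldiv_mult)

lemma ldiv_self [simp]: "x \<in> Q \<Longrightarrow> ld x x = e"
  by (rule ldiv_unique) simp_all

lemma translations_Bij: "lmap Q m ` Q \<union> rmap Q m ` Q \<subseteq> carrier (BijGroup Q)"
proof -
  have "lmap Q m x \<in> Bij Q" "rmap Q m x \<in> Bij Q" if "x \<in> Q" for x
    using bij_left_mult[OF that] bij_right_mult[OF that]
    unfolding Bij_def lmap_def rmap_def by (simp_all add: bij_betw_def inj_on_def)
  then show ?thesis
    by (auto simp: BijGroup_def)
qed

lemma subgroup_Mlt: "subgroup (Mlt Q m) (BijGroup Q)"
  unfolding Mlt_def by (rule group.generate_is_subgroup[OF group_BijGroup translations_Bij])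

lemma Mlt_Bij: "g \<in> Mlt Q m \<Longrightarrow> g \<in> Bij Q"
  using subgroup.subset[OF subgroup_Mlt] by (auto simp: BijGroup_def)

text \<open>Maps on \<open>Q\<close> are compared only on \<open>Q\<close>, so that composites of translations can be
  written as plain lambda terms.\<close>

definition in_Mlt :: "('a \<Rightarrow> 'a) \<Rightarrow> bool" where
  "in_Mlt f \<longleftrightarrow> (\<exists>g\<in>Mlt Q m. \<forall>w\<in>Q. g w = f w)"

lemma in_Mlt_left_mult: "x \<in> Q \<Longrightarrow> in_Mlt (m x)"
  unfolding in_Mlt_def Mlt_def
  by (rule bexI[of _ "lmap Q m x"]) (auto simp: lmap_def intro: generate.incl)

lemma in_Mlt_ldiv: assumes x: "x \<in> Q" shows "in_Mlt (ld x)"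
proof -
  have L: "lmap Q m x \<in> Bij Q"
    using translations_Bij x by (auto simp: BijGroup_def)
  have "inv\<^bsub>BijGroup Q\<^esub> (lmap Q m x) \<in> Mlt Q m"
    unfolding Mlt_def using x by (auto intro: generate.inv)
  moreover have "(inv\<^bsub>BijGroup Q\<^esub> (lmap Q m x)) w = ld x w" if w: "w \<in> Q" for w
  proof -
    have "inv_into Q (lmap Q m x) (lmap Q m x (ld x w)) = ld x w"
      using L x w by (simp add: Bij_def bij_betw_def)
    then show ?thesis
      using inv_BijGroup[OF L] x w by (simp add: lmap_def)
  qed
  ultimately show ?thesis
    unfolding in_Mlt_def by blast
qed

lemma in_Mlt_closed: "in_Mlt f \<Longrightarrow> w \<in> Q \<Longrightarrow> f w \<in> Q"
  unfolding in_Mlt_def using Mlt_Bij by (force simp: Bij_def bij_betw_def)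

lemma in_Mlt_comp:
  assumes "in_Mlt f" "in_Mlt g"
  shows "in_Mlt (\<lambda>w. f (g w))"
proof -
  obtain f' g' where f': "f' \<in> Mlt Q m" "\<forall>w\<in>Q. f' w = f w"
    and g': "g' \<in> Mlt Q m" "\<forall>w\<in>Q. g' w = g w"
    using assms(1,2) unfolding in_Mlt_def by blast
  have "f' \<otimes>\<^bsub>BijGroup Q\<^esub> g' \<in> Mlt Q m"
    using f' g' unfolding Mlt_def by (auto intro: generate.eng)
  moreover have "\<forall>w\<in>Q. (f' \<otimes>\<^bsub>BijGroup Q\<^esub> g') w = f (g w)"
    using f' g' Mlt_Bij[OF f'(1)] Mlt_Bij[OF g'(1)] in_Mlt_closed[OF assms(2)]
    by (auto simp: BijGroup_def compose_def)
  ultimately show ?thesis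
    unfolding in_Mlt_def by blast
qed

lemma in_Mlt_cong: "in_Mlt f \<Longrightarrow> (\<And>w. w \<in> Q \<Longrightarrow> f w = g w) \<Longrightarrow> in_Mlt g"
  unfolding in_Mlt_def by simp

lemma restrict_in_Mlt: assumes "in_Mlt f" shows "restrict f Q \<in> Mlt Q m"
proof -
  obtain g where g: "g \<in> Mlt Q m" "\<forall>w\<in>Q. g w = f w"
    using assms unfolding in_Mlt_def by blast
  have "g \<in> extensional Q"
    using Mlt_Bij[OF g(1)] by (simp add: Bij_def)
  then have "g = restrict f Q"
    using g(2) by (auto simp: extensional_def)
  with g(1) show ?thesis by simp
qed

end

locale comm_A_loop_on =
  fixes Q :: "'a set" and m :: "'a \<Rightarrow> 'a \<Rightarrow> 'a" and e :: 'a
  assumes comm_A_loop: "comm_A_loop Q m e"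

sublocale comm_A_loop_on \<subseteq> loop_on
  using comm_A_loop by unfold_locales (simp add: comm_A_loop_def)

context comm_A_loop_on
begin

lemma mult_commute: "x \<in> Q \<Longrightarrow> y \<in> Q \<Longrightarrow> m x y = m y x"
  using comm_A_loop by (simp add: comm_A_loop_def)

lemma inner_mapping_hom:
  assumes "in_Mlt f" "f e = e" "a \<in> Q" "b \<in> Q"
  shows "f (m a b) = m (f a) (f b)"
proof -
  obtain g where g: "g \<in> Mlt Q m" "\<forall>w\<in>Q. g w = f w"
    using assms(1) unfolding in_Mlt_def by blast
  with assms(2) have "g \<in> Inn Q m e"
    by (simp add: Inn_def)
  then have "loop_aut Q m g"
    using comm_A_loop by (simp add: comm_A_loop_def)
  with g assms(3,4) show ?thesis
    by (simp add: loop_aut_def)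
qed

abbreviation iv :: "'a \<Rightarrow> 'a" where "iv x \<equiv> ld x e"

lemma mult_inv_left [simp]: "x \<in> Q \<Longrightarrow> m (iv x) x = e"
  by (metis mult_commute mult_ldiv ldiv_closed unit_closed)

lemma inv_inv [simp]: "x \<in> Q \<Longrightarrow> iv (iv x) = x"
  by (rule ldiv_unique) simp_all

lemma inv_unit [simp]: "iv e = e"
  by (rule ldiv_unique) simp_all

lemma inner_mapping_inv:
  assumes "in_Mlt f" "f e = e" "y \<in> Q"
  shows "f (iv y) = iv (f y)"
proof -
  have "m (f y) (f (iv y)) = e"
    using inner_mapping_hom[OF assms(1,2), of y "iv y"] assms by simp
  then show ?thesis
    using assms in_Mlt_closed by (metis ldiv_unique ldiv_closed unit_closed)
qed

lemma in_Mlt_mult_inv_mult: "x \<in> Q \<Longrightarrow> in_Mlt (\<lambda>w. m x (m (iv x) w))"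
  by (rule in_Mlt_comp[OF in_Mlt_left_mult in_Mlt_left_mult]) auto

text \<open>The inner mapping \<open>w \<mapsto> x(x\<inverse>w)\<close> is multiplicative and fixes \<open>x\<close>; evaluate it at \<open>xw\<close>.\<close>

lemma mult_inv_mult_commute: assumes x: "x \<in> Q" and w: "w \<in> Q"
  shows "m x (m (iv x) w) = m (iv x) (m x w)"
proof -
  have "m x (m (iv x) (m x w)) = m (m x (m (iv x) x)) (m x (m (iv x) w))"
    using inner_mapping_hom[OF in_Mlt_mult_inv_mult] x w by simp
  also have "\<dots> = m x (m x (m (iv x) w))"
    using x by simp
  finally show ?thesis
    using x w by (metis left_cancel mult_closed ldiv_closed unit_closed)
qed

lemma mult_inv_mult_inv:
  "x \<in> Q \<Longrightarrow> y \<in> Q \<Longrightarrow> m x (m (iv x) (iv y)) = iv (m x (m (iv x) y))"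
  using inner_mapping_inv[OF in_Mlt_mult_inv_mult, of x y] by simp

lemma inv_mult_ldiv_commute: "x \<in> Q \<Longrightarrow> y \<in> Q \<Longrightarrow> m (iv x) (ld x y) = ld x (m (iv x) y)"
  by (rule ldiv_unique[symmetric]) (simp_all add: mult_inv_mult_commute)

lemma mult_ldiv_inv_commute: "x \<in> Q \<Longrightarrow> y \<in> Q \<Longrightarrow> m x (ld (iv x) y) = ld (iv x) (m x y)"
  using inv_mult_ldiv_commute[of "iv x" y] by simp

lemma ldiv_mult_right: "x \<in> Q \<Longrightarrow> y \<in> Q \<Longrightarrow> ld x (m y x) = y"
  using mult_commute[of y x] by simp

lemma inv_mult_mult_right: "x \<in> Q \<Longrightarrow> y \<in> Q \<Longrightarrow> m (iv x) (m y x) = m x (m (iv x) y)"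
  using mult_inv_mult_commute[of x y] mult_commute[of y x] by simp

lemma inv_mult_inv_ldiv:
  assumes x: "x \<in> Q" and y: "y \<in> Q"
  shows "m (iv x) (iv (ld x y)) = ld x (iv (m (iv x) y))"
proof -
  have "m x (m (iv x) (iv (ld x y))) = iv (m (iv x) y)"
    using mult_inv_mult_inv[of x "ld x y"] mult_inv_mult_commute[of x "ld x y"] x y by simp
  then show ?thesis
    using x y by (intro ldiv_unique[symmetric]) simp_all
qed

lemma mult_inv_ldiv_inv: "x \<in> Q \<Longrightarrow> y \<in> Q \<Longrightarrow> m x (iv (ld (iv x) y)) = ld (iv x) (iv (m x y))"
  using inv_mult_inv_ldiv[of "iv x" y] by simp

lemma ldiv_inv_mult_mult: assumes "a \<in> Q" "b \<in> Q"
  shows "ld (m (iv a) b) (m (iv a) (m a b)) = a"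
proof -
  have "m (iv a) (m a b) = m (m (iv a) b) a"
    using mult_inv_mult_commute[of a b] mult_commute[of a "m (iv a) b"] assms by simp
  with assms show ?thesis
    by simp
qed

definition L_inner :: "'a \<Rightarrow> 'a \<Rightarrow> 'a \<Rightarrow> 'a" where
  "L_inner x y w = ld (m y x) (m y (m x w))"

lemma L_inner_hom:
  assumes "x \<in> Q" "y \<in> Q" "u \<in> Q" "v \<in> Q"
  shows "L_inner x y (m u v) = m (L_inner x y u) (L_inner x y v)"
proof (rule inner_mapping_hom)
  show "in_Mlt (L_inner x y)"
    unfolding L_inner_def
    by (rule in_Mlt_comp[OF in_Mlt_ldiv in_Mlt_comp[OF in_Mlt_left_mult in_Mlt_left_mult]])
      (use assms in auto)
  show "L_inner x y e = e"
    using assms by (simp add: L_inner_def)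
qed (use assms in auto)

lemma inv_mult_mult_mult_inv:
  assumes x: "x \<in> Q" and y: "y \<in> Q"
  shows "m (iv (m x y)) (m x (m y (iv x))) = iv (m (m x y) (m x (iv (m x y))))"
proof -
  define c w where "c = m x y" and "w = m x (m y (iv x))"
  have cQ: "c \<in> Q" and wQ: "w \<in> Q"
    using x y by (simp_all add: c_def w_def)
  have "m (iv x) c = w"
    using mult_inv_mult_commute[of x y] mult_commute[of y "iv x"] x y
    by (simp add: c_def w_def)
  then have h: "m c (m (iv x) (iv c)) = m w (iv c)"
    using inv_mult_mult_right[of c "iv x"] mult_commute[of "iv c" "iv x"]
      mult_commute[of "iv c" w] x cQ wQ by simp
  have "iv (m c (m x (iv c))) = iv (m c (m (iv c) x))"
    using x cQ mult_commute[of x "iv c"] by simp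
  also have "\<dots> = m c (m (iv x) (iv c))"
    using mult_inv_mult_inv[of c x] mult_commute[of "iv x" "iv c"] x cQ by simp
  also have "\<dots> = m (iv c) w"
    using h mult_commute[of w "iv c"] cQ wQ by simp
  finally show ?thesis
    by (simp add: c_def w_def)
qed

text \<open>With \<open>a = x(xy)\<inverse>\<close>, the inner mapping \<open>L(x,(xy)\<inverse>)\<close> sends \<open>y\<close>, \<open>x\<inverse>\<close> and \<open>yx\<inverse>\<close> to
  \<open>a\<inverse>\<close>, \<open>a\(xy)\<inverse>\<close> and \<open>a\(xy\<cdot>a)\<inverse>\<close>; its multiplicativity forces \<open>a\<inverse> = (xy)x\<inverse>\<close>.\<close>

lemma inv_mult_inv_mult_inv:
  assumes x: "x \<in> Q" and y: "y \<in> Q"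
  shows "iv (m x (iv (m x y))) = m x (m (iv x) y)"
proof -
  define c d a where "c = m x y" and "d = iv c" and "a = m x d"
  have cQ: "c \<in> Q" and dQ: "d \<in> Q" and aQ: "a \<in> Q"
    using x y by (simp_all add: c_def d_def a_def)
  have a_eq: "m d x = a"
    using mult_commute x dQ by (simp add: a_def)
  have Ly: "L_inner x d y = iv a"
    using x y dQ a_eq by (simp add: L_inner_def c_def d_def)
  have Lx: "L_inner x d (iv x) = ld a d"
    using x dQ a_eq by (simp add: L_inner_def)
  have Lyx: "L_inner x d (m y (iv x)) = ld a (iv (m c a))"
    using inv_mult_mult_mult_inv[OF x y] x y a_eq by (simp add: L_inner_def d_def c_def a_def)
  have "ld (m a (ld a d)) (m a (ld a (iv (m c a)))) = iv a"
    using ldiv_inv_mult_mult[of "L_inner x d y" "L_inner x d (iv x)"]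
      L_inner_hom[of x d y "iv x"] Ly Lx Lyx x y dQ aQ by simp
  then have "ld d (iv (m c a)) = iv a"
    using aQ dQ cQ by simp
  moreover have "ld d (iv (m c a)) = m c (iv (ld d a))"
    using mult_inv_ldiv_inv[of c a] cQ aQ by (simp add: d_def)
  moreover have "ld d a = x"
    using ldiv_mult_right[of d x] x dQ by (simp add: a_def)
  ultimately have "iv a = m (iv x) c"
    using cQ x mult_commute by simp
  then show ?thesis
    using inv_mult_mult_right[of x y] mult_commute[of x y] x y by (simp add: a_def d_def c_def)
qed

lemma inv_mult_distrib: assumes "x \<in> Q" "y \<in> Q" shows "iv (m x y) = m (iv x) (iv y)"
  using inv_mult_inv_mult_inv[of x "ld x (iv y)"] mult_inv_mult_commute[of x "ld x (iv y)"] assms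
  by simp

lemma inv_ldiv: assumes "a \<in> Q" "b \<in> Q" shows "iv (ld a b) = ld (iv a) (iv b)"
proof -
  have "m (iv a) (iv (ld a b)) = iv b"
    using inv_mult_distrib[of a "ld a b"] assms by simp
  with assms show ?thesis
    by (intro ldiv_unique[symmetric]) simp_all
qed

abbreviation P :: "'a \<Rightarrow> 'a \<Rightarrow> 'a" where "P \<equiv> Pmap Q m e"

lemma Pmap_apply [simp]: "w \<in> Q \<Longrightarrow> P x w = ld (iv x) (m x w)"
  by (simp add: Pmap_def linv_def)

lemma Pmap_outside [simp]: "w \<notin> Q \<Longrightarrow> P x w = undefined"
  by (simp add: Pmap_def)

lemma in_Mlt_Pmap: assumes "x \<in> Q" shows "in_Mlt (P x)"
proof (rule in_Mlt_cong)
  show "in_Mlt (\<lambda>w. ld (iv x) (m x w))"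
    by (rule in_Mlt_comp[OF in_Mlt_ldiv in_Mlt_left_mult]) (use assms in auto)
qed simp

lemma inv_Pmap: "x \<in> Q \<Longrightarrow> v \<in> Q \<Longrightarrow> iv (P x v) = ld x (m (iv x) (iv v))"
  using inv_ldiv[of "iv x" "m x v"] inv_mult_distrib[of x v] by simp

text \<open>With \<open>z = yP\<^sub>x\<close>, the map \<open>\<iota> : t \<mapsto> z\((yt)P\<^sub>x)\<close> is an inner mapping, so it commutes
  with inversion. Together with the automorphic inverse property this gives \<open>u\<iota> = z\<inverse>\w\<close> for
  \<open>u = y\<inverse>\(wP\<^sub>x)\<close>, whence \<open>wP\<^sub>xP\<^sub>yP\<^sub>x = (yu)P\<^sub>x = z(u\<iota>) = wP\<^sub>z\<close>.\<close>

lemma Pmap_Pmap_Pmap: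
  assumes x: "x \<in> Q" and y: "y \<in> Q" and w: "w \<in> Q"
  shows "P x (P y (P x w)) = P (P x y) w"
proof -
  define z where "z = P x y"
  have zQ: "z \<in> Q"
    using x y by (simp add: z_def)
  define \<iota> where "\<iota> t = ld z (P x (m y t))" for t
  have \<iota>_Mlt: "in_Mlt \<iota>"
    unfolding \<iota>_def
    by (rule in_Mlt_comp[OF in_Mlt_ldiv in_Mlt_comp[OF in_Mlt_Pmap in_Mlt_left_mult]])
      (use x y zQ in auto)
  have \<iota>_closed: "\<And>t. t \<in> Q \<Longrightarrow> \<iota> t \<in> Q"
    using x y zQ by (simp add: \<iota>_def)
  have \<iota>_unit: "\<iota> e = e"
    using x y zQ by (simp add: \<iota>_def z_def)
  have P_xy: "\<And>t. t \<in> Q \<Longrightarrow> P x (m y t) = m z (\<iota> t)"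
    using x y zQ by (simp add: \<iota>_def)
  define v u where "v = P x w" and "u = ld (iv y) v"
  have vQ: "v \<in> Q" and uQ: "u \<in> Q"
    using x y w by (simp_all add: v_def u_def)
  have P_yv: "P y v = m y u"
    using mult_ldiv_inv_commute[of y v] y vQ by (simp add: u_def)
  have "m (iv z) (\<iota> u) = m (iv z) (iv (\<iota> (iv u)))"
    using inner_mapping_inv[OF \<iota>_Mlt \<iota>_unit, of "iv u"] uQ by simp
  also have "\<dots> = iv (m z (\<iota> (iv u)))"
    using inv_mult_distrib zQ uQ \<iota>_closed by simp
  also have "\<dots> = iv (P x (m y (iv u)))"
    using P_xy[of "iv u"] uQ by simp
  also have "\<dots> = ld x (m (iv x) (m (iv y) u))"
    using inv_Pmap[of x "m y (iv u)"] inv_mult_distrib[of y "iv u"] x y uQ by simp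
  also have "\<dots> = w"
    using x y w vQ by (simp add: u_def v_def)
  finally have "\<iota> u = ld (iv z) w"
    using zQ uQ \<iota>_closed w by (intro ldiv_unique[symmetric]) simp_all
  then have "P x (P y (P x w)) = m z (ld (iv z) w)"
    using P_xy[of u] uQ P_yv by (simp add: v_def)
  also have "\<dots> = P z w"
    using mult_ldiv_inv_commute[of z w] zQ w by simp
  finally show ?thesis
    by (simp add: z_def)
qed

lemma Pmap_Mlt: "x \<in> Q \<Longrightarrow> P x \<in> Mlt Q m"
  using restrict_in_Mlt[OF in_Mlt_Pmap] by (simp add: Pmap_def)

lemma Pmap_carrier: "x \<in> Q \<Longrightarrow> P x \<in> carrier (BijGroup Q)"
  using Mlt_Bij[OF Pmap_Mlt] by (simp add: BijGroup_def)

lemma Pmap_mult_Pmap_mult_Pmap: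
  assumes x: "x \<in> Q" and y: "y \<in> Q"
  shows "P x \<otimes>\<^bsub>BijGroup Q\<^esub> P y \<otimes>\<^bsub>BijGroup Q\<^esub> P x = P (P x y)"
proof -
  have "compose Q (compose Q (P x) (P y)) (P x) = P (P x y)"
  proof
    fix w
    show "compose Q (compose Q (P x) (P y)) (P x) w = P (P x y) w"
      using Pmap_Pmap_Pmap[OF x y] x y
      by (cases "w \<in> Q") (simp_all add: compose_def)
  qed
  then show ?thesis
    using Pmap_carrier[OF x] Pmap_carrier[OF y] compose_Bij[of "P x" Q "P y"]
    by (simp add: BijGroup_def)
qed

lemma Pmap_unit: "P e = \<one>\<^bsub>BijGroup Q\<^esub>"
  by (auto simp: BijGroup_def Pmap_def linv_def intro!: restrict_ext ldiv_unique)

lemma inv_Pmap_BijGroup: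
  assumes x: "x \<in> Q" shows "inv\<^bsub>BijGroup Q\<^esub> (P x) = P (iv x)"
proof (rule group.inv_equality[OF group_BijGroup _ Pmap_carrier[OF x] Pmap_carrier])
  have "compose Q (P (iv x)) (P x) = (\<lambda>w\<in>Q. w)"
  proof
    fix w
    show "compose Q (P (iv x)) (P x) w = (\<lambda>w\<in>Q. w) w"
      using x by (cases "w \<in> Q") (simp_all add: compose_def)
  qed
  then show "P (iv x) \<otimes>\<^bsub>BijGroup Q\<^esub> P x = \<one>\<^bsub>BijGroup Q\<^esub>"
    using Pmap_carrier x by (simp add: BijGroup_def)
qed (use x in simp)

lemma twisted_subgroup_Pmap: "twisted_subgroup (BijGroup Q) (P ` Q)"
  unfolding twisted_subgroup_def
proof (intro conjI ballI)
  show "P ` Q \<subseteq> carrier (BijGroup Q)" "\<one>\<^bsub>BijGroup Q\<^esub> \<in> P ` Q"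
    using Pmap_carrier Pmap_unit[symmetric] by auto
next
  fix a b assume "a \<in> P ` Q" "b \<in> P ` Q"
  then show "inv\<^bsub>BijGroup Q\<^esub> a \<in> P ` Q" "a \<otimes>\<^bsub>BijGroup Q\<^esub> b \<otimes>\<^bsub>BijGroup Q\<^esub> a \<in> P ` Q"
    using inv_Pmap_BijGroup Pmap_mult_Pmap_mult_Pmap by auto
qed

end

theorem lemma3p3:
  fixes Q :: "'a set" and m :: "'a \<Rightarrow> 'a \<Rightarrow> 'a" and e :: 'a
  assumes "comm_A_loop Q m e"
  shows "(\<forall>x\<in>Q. \<forall>y\<in>Q.
            Pmap Q m e x \<otimes>\<^bsub>BijGroup Q\<^esub> Pmap Q m e y \<otimes>\<^bsub>BijGroup Q\<^esub> Pmap Q m e x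
              = Pmap Q m e (Pmap Q m e x y))
         \<and> twisted_subgroup (BijGroup Q \<lparr>carrier := Mlt Q m\<rparr>) (Pmap Q m e ` Q)"
proof -
  interpret comm_A_loop_on Q m e
    using assms by unfold_locales
  show ?thesis
    using Pmap_mult_Pmap_mult_Pmap Pmap_Mlt twisted_subgroup_Pmap
      group.twisted_subgroup_restrict_carrier[OF group_BijGroup subgroup_Mlt]
    by blast
qed

end
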